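(* Let $r\ge 4$ and let $w:E(K_r)\to\mathbb{R}_{>0}$ be a positive edge-weighting of the complete graph $K_r$. For each edge $e$ let $C_w(e)$ be the maximum of $w(C)=\sum_{f\in E(C)}w(f)$ over all cycles $C$ of $K_r$ containing $e$, and set $\phi(e)=w(e)/C_w(e)$. If $\sum_{e\in E(K_r)}\frac{w(e)}{C_w(e)}=\frac{r-1}{2}$, then there exists $a:V(K_r)\to\mathbb{R}$ such that $\phi(uv)=\frac{a(u)+a(v)}{2}$ for all edges $uv$. *)

theory Defs
  imports Complex_Main
begin

definition Kedges :: "nat \<Rightarrow> nat set set" where
  "Kedges r = {{u, v} | u v. u < r \<and> v < r \<and> u \<noteq> v}"

text \<open>A cycle of K_r is given by a list of at least 3 distinct vertices
  (consecutive vertices adjacent, last adjacent to first).\<close>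
definition is_cycle :: "nat \<Rightarrow> nat list \<Rightarrow> bool" where
  "is_cycle r xs \<longleftrightarrow> length xs \<ge> 3 \<and> distinct xs \<and> set xs \<subseteq> {0..<r}"

definition cycle_edges :: "nat list \<Rightarrow> nat set set" where
  "cycle_edges xs = {{xs ! i, xs ! ((i + 1) mod length xs)} | i. i < length xs}"

definition cycle_weight :: "(nat set \<Rightarrow> real) \<Rightarrow> nat list \<Rightarrow> real" where
  "cycle_weight w xs = (\<Sum>f\<in>cycle_edges xs. w f)"

definition Cw :: "nat \<Rightarrow> (nat set \<Rightarrow> real) \<Rightarrow> nat set \<Rightarrow> real" where
  "Cw r w e = Max {cycle_weight w xs | xs. is_cycle r xs \<and> e \<in> cycle_edges xs}"

end

(*
  For every cycle C and every edge e of C we have C_w(e) >= w(C), so the ratios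
  w(e)/C_w(e) along C sum to at most 1.  Average this over the r! Hamiltonian cycles
  sigma(0), ..., sigma(r-1) given by the permutations sigma: every ordered pair of distinct
  vertices is consecutive equally often, so by the hypothesis the average is exactly 1.
  Hence every Hamiltonian cycle H attains equality, i.e. C_w(e) = w(H) for all edges e of H.
  Two adjacent edges lie on a common Hamiltonian cycle, so C_w is a constant W.  The
  Hamiltonian cycles a b c d ... and a c b d ... share the edge bc, so they have equal
  weight; this is the four-point condition w(ab) + w(cd) = w(ac) + w(bd), which forces
  w(uv) = h(u) + h(v) for some h.  Finally a = 2h/W.
*)
theory Submission
  imports Defs "HOL-Combinatorics.Permutations"
begin

definition cycle_edge :: "nat list \<Rightarrow> nat \<Rightarrow> nat set" where
  "cycle_edge xs i = {xs ! i, xs ! ((i + 1) mod length xs)}"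

lemma succ_mod_eq: "(i::nat) < n \<Longrightarrow> Suc i mod n = (if Suc i = n then 0 else Suc i)"
  by (cases "Suc i = n") auto

lemma cycle_edges_conv_image: "cycle_edges xs = cycle_edge xs ` {..<length xs}"
  unfolding cycle_edges_def cycle_edge_def by auto

lemma inj_on_cycle_edge:
  assumes "distinct xs" "length xs \<ge> 3"
  shows "inj_on (cycle_edge xs) {..<length xs}"
proof (rule inj_onI)
  fix i j
  assume "i \<in> {..<length xs}" "j \<in> {..<length xs}" and eq: "cycle_edge xs i = cycle_edge xs j"
  define n where "n = length xs"
  have i: "i < n" and j: "j < n"
    using \<open>i \<in> _\<close> \<open>j \<in> _\<close> by (simp_all add: n_def)
  have succ: "(k + 1) mod n < n" for k
    using assms(2) unfolding n_def by (intro mod_less_divisor) linarith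
  have nth_inj: "xs ! a = xs ! b \<longleftrightarrow> a = b" if "a < n" "b < n" for a b
    using assms(1) that nth_eq_iff_index_eq unfolding n_def by blast
  from eq have "xs ! i = xs ! j \<or> xs ! i = xs ! ((j + 1) mod n) \<and> xs ! ((i + 1) mod n) = xs ! j"
    by (auto simp: cycle_edge_def doubleton_eq_iff n_def)
  then have "i = j \<or> i = (j + 1) mod n \<and> j = (i + 1) mod n"
    using nth_inj[OF i j] nth_inj[OF i succ] nth_inj[OF succ j] by metis
  moreover have "\<not> (i = (j + 1) mod n \<and> j = (i + 1) mod n)"
    using i j assms(2) succ_mod_eq[OF i] succ_mod_eq[OF j] by (auto simp: n_def)
  ultimately show "i = j"
    by blast
qed

lemma sum_cycle_edges:
  assumes "distinct xs" "length xs \<ge> 3"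
  shows "(\<Sum>e\<in>cycle_edges xs. f e) = (\<Sum>i<length xs. f (cycle_edge xs i))"
  unfolding cycle_edges_conv_image using sum.reindex[OF inj_on_cycle_edge[OF assms]] by simp

lemma finite_cycle_edges: "finite (cycle_edges xs)"
  unfolding cycle_edges_conv_image by simp

lemma consecutive_in_cycle_edges: "i + 1 < length xs \<Longrightarrow> {xs ! i, xs ! (i + 1)} \<in> cycle_edges xs"
  unfolding cycle_edges_def by (rule CollectI, rule exI[of _ i]) simp

lemma doubleton_in_Kedges: "u < r \<Longrightarrow> v < r \<Longrightarrow> u \<noteq> v \<Longrightarrow> {u, v} \<in> Kedges r"
  unfolding Kedges_def by blast

lemma cycle_edge_in_Kedges:
  assumes "is_cycle r xs" "i < length xs"
  shows "cycle_edge xs i \<in> Kedges r"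
proof -
  define j where "j = (i + 1) mod length xs"
  have xs: "distinct xs" "set xs \<subseteq> {0..<r}" "length xs \<ge> 3"
    using assms(1) by (auto simp: is_cycle_def)
  then have j: "j < length xs" "j \<noteq> i"
    using assms(2) by (auto simp: j_def succ_mod_eq)
  have "xs ! i < r" "xs ! j < r"
    using xs(2) j(1) assms(2) nth_mem by fastforce+
  moreover have "xs ! i \<noteq> xs ! j"
    using xs(1) j assms(2) nth_eq_iff_index_eq by metis
  ultimately show ?thesis
    unfolding cycle_edge_def j_def[symmetric] by (rule doubleton_in_Kedges)
qed

lemma cycle_edges_subset_Kedges: "is_cycle r xs \<Longrightarrow> cycle_edges xs \<subseteq> Kedges r"
  using cycle_edge_in_Kedges by (auto simp: cycle_edges_conv_image)

lemma finite_Kedges: "finite (Kedges r)"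
  by (rule finite_subset[of _ "Pow {..<r}"]) (auto simp: Kedges_def)

lemma finite_cycles: "finite {xs. is_cycle r xs}"
proof (rule finite_subset)
  show "{xs. is_cycle r xs} \<subseteq> {xs. set xs \<subseteq> {0..<r} \<and> length xs \<le> r}"
  proof safe
    fix xs
    assume "is_cycle r xs"
    then have "distinct xs" "set xs \<subseteq> {0..<r}"
      by (simp_all add: is_cycle_def)
    then show "length xs \<le> r"
      using card_mono[of "{0..<r}" "set xs"] by (simp add: distinct_card)
  qed (auto simp: is_cycle_def)
  show "finite {xs. set xs \<subseteq> {0..<r} \<and> length xs \<le> r}"
    by (rule finite_lists_length_le) simp
qed

lemma cycle_weight_le_Cw:
  assumes "is_cycle r xs" "e \<in> cycle_edges xs"
  shows "cycle_weight w xs \<le> Cw r w e"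
  unfolding Cw_def
proof (rule Max_ge)
  show "finite {cycle_weight w xs |xs. is_cycle r xs \<and> e \<in> cycle_edges xs}"
    using finite_imageI[OF finite_cycles, of "cycle_weight w" r] by (rule rev_finite_subset) auto
qed (use assms in blast)

lemma cycle_ratio_sum_le_1:
  assumes "is_cycle r xs" and pos: "\<And>e. e \<in> Kedges r \<Longrightarrow> w e > 0"
  shows "(\<Sum>e\<in>cycle_edges xs. w e / Cw r w e) \<le> 1"
    and "(\<Sum>e\<in>cycle_edges xs. w e / Cw r w e) = 1 \<Longrightarrow> e \<in> cycle_edges xs \<Longrightarrow>
           Cw r w e = cycle_weight w xs"
proof -
  define E where "E = cycle_edges xs"
  define W where "W = cycle_weight w xs"
  have w_pos: "w e > 0" if "e \<in> E" for e
    using pos cycle_edges_subset_Kedges[OF assms(1)] that by (auto simp: E_def)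
  have "E \<noteq> {}"
    using assms(1) by (auto simp: E_def cycle_edges_conv_image is_cycle_def lessThan_empty_iff)
  then have W_pos: "W > 0"
    unfolding W_def cycle_weight_def E_def[symmetric]
    using w_pos finite_cycle_edges by (intro sum_pos) (auto simp: E_def)
  have W_le: "W \<le> Cw r w e" if "e \<in> E" for e
    using cycle_weight_le_Cw[OF assms(1)] that by (simp add: E_def W_def)
  have ratio_le: "w e / Cw r w e \<le> w e / W" if "e \<in> E" for e
    using W_le[OF that] w_pos[OF that] W_pos by (intro divide_left_mono) auto
  have sum_W: "(\<Sum>e\<in>E. w e / W) = 1"
    using W_pos by (simp add: W_def cycle_weight_def E_def flip: sum_divide_distrib)
  show "(\<Sum>e\<in>cycle_edges xs. w e / Cw r w e) \<le> 1"
    unfolding E_def[symmetric] sum_W[symmetric] using ratio_le by (rule sum_mono)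
  assume "(\<Sum>e\<in>cycle_edges xs. w e / Cw r w e) = 1" and e: "e \<in> cycle_edges xs"
  with sum_W have "(\<Sum>e\<in>E. w e / Cw r w e) = (\<Sum>e\<in>E. w e / W)"
    by (simp add: E_def)
  then have "w e / Cw r w e = w e / W"
    using ratio_le e finite_cycle_edges unfolding E_def by (rule sum_mono_inv)
  then show "Cw r w e = cycle_weight w xs"
    using w_pos[of e] W_pos W_le[of e] e by (auto simp: E_def W_def field_simps)
qed

lemma exists_permutes_pair:
  assumes "i \<in> A" "j \<in> A" "k \<in> A" "l \<in> A" "i \<noteq> j" "k \<noteq> l"
  obtains p where "p permutes A" "p k = i" "p l = j"
proof
  define q where "q = transpose k i"
  have q: "q permutes A"
    unfolding q_def using assms(3,1) by (rule permutes_swap_id)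
  then have "q l \<in> A"
    using assms(4) by (rule permutes_in_image[THEN iffD2])
  with q show "transpose (q l) j \<circ> q permutes A"
    using assms(2) by (intro permutes_compose permutes_swap_id)
  have "q l \<noteq> i"
    using assms(6) by (auto simp: q_def transpose_eq_iff)
  with assms(5) show "(transpose (q l) j \<circ> q) k = i"
    by (simp add: q_def)
  show "(transpose (q l) j \<circ> q) l = j"
    by simp
qed

lemma sum_permutes_pair_indep:
  assumes "i \<in> A" "j \<in> A" "k \<in> A" "l \<in> A" "i \<noteq> j" "k \<noteq> l"
  shows "(\<Sum>\<sigma> | \<sigma> permutes A. g (\<sigma> i) (\<sigma> j)) = (\<Sum>\<sigma> | \<sigma> permutes A. g (\<sigma> k) (\<sigma> l))"
proof -
  obtain p where p: "p permutes A" "p k = i" "p l = j"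
    using exists_permutes_pair[OF assms] .
  have "(\<Sum>\<sigma> | \<sigma> permutes A. g (\<sigma> k) (\<sigma> l)) = (\<Sum>\<sigma> | \<sigma> permutes A. g ((\<sigma> \<circ> p) k) ((\<sigma> \<circ> p) l))"
    using p(1) by (rule sum_permutations_compose_right)
  with p show ?thesis
    by simp
qed

lemma sum_distinct_pairs_permute:
  assumes "\<sigma> permutes A"
  shows "(\<Sum>i\<in>A. \<Sum>j\<in>A - {i}. g (\<sigma> i) (\<sigma> j)) = (\<Sum>u\<in>A. \<Sum>v\<in>A - {u}. g u v)"
proof -
  have inj: "inj_on \<sigma> X" for X
    using permutes_inj[OF assms] by (rule inj_on_subset) simp
  have "(\<Sum>j\<in>A - {i}. g (\<sigma> i) (\<sigma> j)) = (\<Sum>v\<in>A - {\<sigma> i}. g (\<sigma> i) v)" for i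
  proof -
    have "\<sigma> ` (A - {i}) = A - {\<sigma> i}"
      using assms inj by (simp add: image_set_diff permutes_image permutes_inj)
    then show ?thesis
      using sum.reindex[OF inj, of "g (\<sigma> i)" "A - {i}"] by simp
  qed
  then show ?thesis
    using sum.reindex[OF inj, of "\<lambda>u. \<Sum>v\<in>A - {u}. g u v" A] by (simp add: permutes_image[OF assms])
qed

lemma sum_permutes_apply_pair:
  fixes g :: "'a \<Rightarrow> 'a \<Rightarrow> 'b :: comm_semiring_1"
  assumes "finite A" "i \<in> A" "j \<in> A" "i \<noteq> j"
  shows "of_nat (card A * (card A - 1)) * (\<Sum>\<sigma> | \<sigma> permutes A. g (\<sigma> i) (\<sigma> j))
           = of_nat (fact (card A)) * (\<Sum>u\<in>A. \<Sum>v\<in>A - {u}. g u v)"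
proof -
  define T where "T = (\<Sum>\<sigma> | \<sigma> permutes A. g (\<sigma> i) (\<sigma> j))"
  have "(\<Sum>\<sigma> | \<sigma> permutes A. \<Sum>k\<in>A. \<Sum>l\<in>A - {k}. g (\<sigma> k) (\<sigma> l))
          = (\<Sum>k\<in>A. \<Sum>l\<in>A - {k}. \<Sum>\<sigma> | \<sigma> permutes A. g (\<sigma> k) (\<sigma> l))"
    by (subst sum.swap, rule sum.cong[OF refl], rule sum.swap)
  also have "\<dots> = (\<Sum>k\<in>A. \<Sum>l\<in>A - {k}. T)"
    unfolding T_def using assms(2-4) by (intro sum.cong refl sum_permutes_pair_indep) auto
  also have "\<dots> = of_nat (card A * (card A - 1)) * T"
    using assms(1) by (simp add: mult.assoc)
  finally show ?thesis
    using sum_distinct_pairs_permute[of _ A g] card_permutations[OF refl assms(1)]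
    by (simp add: T_def)
qed

lemma sum_distinct_pairs_Kedges:
  fixes f :: "nat set \<Rightarrow> 'b :: comm_semiring_1"
  shows "(\<Sum>u<r. \<Sum>v\<in>{..<r} - {u}. f {u, v}) = 2 * (\<Sum>e\<in>Kedges r. f e)"
proof -
  define D where "D = Sigma {..<r} (\<lambda>u. {..<r} - {u})"
  define edge :: "nat \<times> nat \<Rightarrow> nat set" where "edge = (\<lambda>(u, v). {u, v})"
  have fiber_sum: "(\<Sum>p\<in>{p \<in> D. edge p = e}. f (edge p)) = 2 * f e" if e: "e \<in> Kedges r" for e
  proof -
    obtain u v where uv: "e = {u, v}" "u < r" "v < r" "u \<noteq> v"
      using e by (auto simp: Kedges_def)
    then have "{p \<in> D. edge p = e} = {(u, v), (v, u)}"
      by (auto simp: D_def edge_def doubleton_eq_iff)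
    with uv show ?thesis
      by (simp add: edge_def insert_commute mult_2)
  qed
  have "(\<Sum>u<r. \<Sum>v\<in>{..<r} - {u}. f {u, v}) = (\<Sum>p\<in>D. f (edge p))"
    unfolding D_def edge_def by (simp add: sum.Sigma split_def)
  also have "\<dots> = (\<Sum>e\<in>Kedges r. \<Sum>p\<in>{p \<in> D. edge p = e}. f (edge p))"
    by (rule sum.group[symmetric, OF _ finite_Kedges]) (auto simp: D_def Kedges_def edge_def)
  also have "\<dots> = (\<Sum>e\<in>Kedges r. 2 * f e)"
    using fiber_sum by (rule sum.cong[OF refl])
  finally show ?thesis
    by (simp add: sum_distrib_left)
qed

definition hamiltonian :: "nat \<Rightarrow> nat list \<Rightarrow> bool" where
  "hamiltonian r xs \<longleftrightarrow> distinct xs \<and> set xs = {..<r}"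

lemma length_hamiltonian: "hamiltonian r xs \<Longrightarrow> length xs = r"
  unfolding hamiltonian_def using distinct_card by fastforce

lemma hamiltonian_is_cycle: "hamiltonian r xs \<Longrightarrow> 3 \<le> r \<Longrightarrow> is_cycle r xs"
  using length_hamiltonian by (auto simp: hamiltonian_def is_cycle_def atLeast0LessThan)

lemma hamiltonian_map_permutes: "\<sigma> permutes {..<r} \<Longrightarrow> hamiltonian r (map \<sigma> [0..<r])"
  by (simp add: hamiltonian_def distinct_map permutes_inj_on permutes_image atLeast0LessThan)

lemma sum_cycle_edges_map_permutes:
  assumes "\<sigma> permutes {..<r}" "3 \<le> r"
  shows "(\<Sum>e\<in>cycle_edges (map \<sigma> [0..<r]). f e) = (\<Sum>i<r. f {\<sigma> i, \<sigma> ((i + 1) mod r)})"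
proof -
  have "hamiltonian r (map \<sigma> [0..<r])"
    using assms(1) by (rule hamiltonian_map_permutes)
  then have "(\<Sum>e\<in>cycle_edges (map \<sigma> [0..<r]). f e) = (\<Sum>i<r. f (cycle_edge (map \<sigma> [0..<r]) i))"
    using assms(2) by (simp add: sum_cycle_edges hamiltonian_def)
  also have "\<dots> = (\<Sum>i<r. f {\<sigma> i, \<sigma> ((i + 1) mod r)})"
    using assms(2) by (intro sum.cong) (auto simp: cycle_edge_def)
  finally show ?thesis .
qed

lemma hamiltonian_eq_map_permutes:
  assumes "hamiltonian r xs"
  obtains \<sigma> where "\<sigma> permutes {..<r}" "xs = map \<sigma> [0..<r]"
proof -
  have "mset xs = mset [0..<r]"
    using assms unfolding hamiltonian_def
    by (metis atLeast0LessThan distinct_upt set_eq_iff_mset_eq_distinct set_upt)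
  then obtain \<sigma> where \<sigma>: "\<sigma> permutes {..<r}" "permute_list \<sigma> [0..<r] = xs"
    by (metis length_upt minus_nat.diff_0 mset_eq_permutation)
  have "permute_list \<sigma> [0..<r] = map \<sigma> [0..<r]"
    using permutes_in_image[OF \<sigma>(1)] by (auto simp: permute_list_def)
  with \<sigma> show thesis
    using that by simp
qed

lemma hamiltonian_extend:
  assumes "distinct xs" "set xs \<subseteq> {..<r}"
  obtains ys where "hamiltonian r (xs @ ys)"
proof
  show "hamiltonian r (xs @ sorted_list_of_set ({..<r} - set xs))"
    using assms by (auto simp: hamiltonian_def)
qed

lemma cycle_weight_swap:
  assumes "distinct (a # b # c # d # ys)"
  shows "cycle_weight w (a # b # c # d # ys) + w {a, c} + w {b, d}
           = cycle_weight w (a # c # b # d # ys) + w {a, b} + w {c, d}"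
proof -
  define xs where "xs = a # b # c # d # ys"
  define zs where "zs = a # c # b # d # ys"
  define n where "n = length ys + 4"
  define tail where "tail vs = (\<Sum>i\<in>{3..<n}. w (cycle_edge vs i))" for vs
  have len: "length xs = n" "length zs = n"
    by (simp_all add: xs_def zs_def n_def)
  have weight: "cycle_weight w vs = w (cycle_edge vs 0) + w (cycle_edge vs 1) + w (cycle_edge vs 2)
                  + tail vs" if "distinct vs" "length vs = n" for vs
  proof -
    have "{..<n} = {0, 1, 2} \<union> {3..<n}"
      by (auto simp: n_def)
    then show ?thesis
      using that by (simp add: cycle_weight_def sum_cycle_edges n_def tail_def sum.union_disjoint)
  qed
  have same_nth: "xs ! i = zs ! i" if "i \<noteq> 1" "i \<noteq> 2" for i
    using that by (auto simp: xs_def zs_def nth_Cons split: nat.split)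
  have "cycle_edge xs i = cycle_edge zs i" if "i \<in> {3..<n}" for i
  proof -
    have "(i + 1) mod n \<notin> {1, 2}"
      using that by (auto simp: succ_mod_eq)
    with that show ?thesis
      using same_nth len by (simp add: cycle_edge_def)
  qed
  then have "tail xs = tail zs"
    by (simp add: tail_def)
  moreover have "distinct xs" "distinct zs"
    using assms by (auto simp: xs_def zs_def)
  moreover have "cycle_edge xs 0 = {a, b}" "cycle_edge xs 1 = {b, c}" "cycle_edge xs 2 = {c, d}"
    "cycle_edge zs 0 = {a, c}" "cycle_edge zs 1 = {b, c}" "cycle_edge zs 2 = {b, d}"
    by (simp_all add: cycle_edge_def xs_def zs_def insert_commute)
  ultimately show ?thesis
    using weight len unfolding xs_def[symmetric] zs_def[symmetric] by simp
qed

lemma four_point_imp_additive: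
  fixes g :: "nat set \<Rightarrow> real"
  assumes four_point: "\<And>a b c d. a < r \<Longrightarrow> b < r \<Longrightarrow> c < r \<Longrightarrow> d < r \<Longrightarrow> distinct [a, b, c, d] \<Longrightarrow>
              g {a, b} + g {c, d} = g {a, c} + g {b, d}"
  obtains h where "\<And>u v. u < r \<Longrightarrow> v < r \<Longrightarrow> u \<noteq> v \<Longrightarrow> g {u, v} = h u + h v"
proof
  \<comment> \<open>h 0 and h 1 are forced by the triangle 0 1 2, and h u for u \<ge> 2 by the triangle 0 1 u.\<close>
  define h where "h u = (if u = 0 then g {0, 1} + g {0, 2} - g {1, 2}
     else if u = 1 then g {0, 1} + g {1, 2} - g {0, 2}
     else g {u, 0} + g {u, 1} - g {0, 1}) / 2" for u
  have ordered: "g {u, v} = h u + h v" if uv: "u < v" "v < r" for u v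
  proof -
    have "u = 0 \<or> u = 1 \<or> u \<ge> 2" "v = 1 \<or> v = 2 \<or> v \<ge> 3"
      using uv by auto
    then consider "u = 0" "v = 1" | "u = 0" "v = 2" | "u = 1" "v = 2"
      | "u = 0" "v \<ge> 3" | "u = 1" "v \<ge> 3" | "u \<ge> 2"
      using uv by fastforce
    then show ?thesis
    proof cases
      case 4
      with uv four_point[of 0 2 v 1] show ?thesis
        by (simp add: h_def insert_commute field_simps)
    next
      case 5
      with uv four_point[of 1 2 v 0] show ?thesis
        by (simp add: h_def insert_commute field_simps)
    next
      case 6
      with uv four_point[of u 0 v 1] four_point[of u 1 v 0] show ?thesis
        by (simp add: h_def insert_commute field_simps)
    qed (use uv in \<open>auto simp: h_def insert_commute field_simps\<close>)
  qed
  show "g {u, v} = h u + h v" if "u < r" "v < r" "u \<noteq> v" for u v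
    using that ordered[of u v] ordered[of v u] by (cases "u < v") (auto simp: insert_commute)
qed

context
  fixes r :: nat and w :: "nat set \<Rightarrow> real"
  assumes three_le_r: "3 \<le> r"
    and pos: "\<And>e. e \<in> Kedges r \<Longrightarrow> w e > 0"
    and tight: "(\<Sum>e\<in>Kedges r. w e / Cw r w e) = (real r - 1) / 2"
begin

lemma sum_permutes_ratio_pair:
  assumes "i < r" "j < r" "i \<noteq> j"
  shows "real r * (\<Sum>\<sigma> | \<sigma> permutes {..<r}. w {\<sigma> i, \<sigma> j} / Cw r w {\<sigma> i, \<sigma> j}) = fact r"
proof -
  define \<psi> where "\<psi> u v = w {u, v} / Cw r w {u, v}" for u v
  have "(\<Sum>u<r. \<Sum>v\<in>{..<r} - {u}. \<psi> u v) = real r - 1"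
    using sum_distinct_pairs_Kedges[of "\<lambda>e. w e / Cw r w e" r] tight by (simp add: \<psi>_def)
  then have "real (r * (r - 1)) * (\<Sum>\<sigma> | \<sigma> permutes {..<r}. \<psi> (\<sigma> i) (\<sigma> j)) = fact r * (real r - 1)"
    using sum_permutes_apply_pair[of "{..<r}" i j \<psi>] assms by simp
  then show ?thesis
    using three_le_r by (simp add: of_nat_diff \<psi>_def)
qed

lemma ratio_sum_hamiltonian_eq_1:
  assumes "hamiltonian r xs"
  shows "(\<Sum>e\<in>cycle_edges xs. w e / Cw r w e) = 1"
proof -
  define P where "P = {\<sigma>. \<sigma> permutes {..<r}}"
  define R where "R \<sigma> = (\<Sum>e\<in>cycle_edges (map \<sigma> [0..<r]). w e / Cw r w e)" for \<sigma>
  have R_le: "R \<sigma> \<le> 1" if "\<sigma> \<in> P" for \<sigma>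
    using that hamiltonian_map_permutes hamiltonian_is_cycle three_le_r cycle_ratio_sum_le_1(1) pos
    by (simp add: P_def R_def)
  have "(\<Sum>\<sigma>\<in>P. R \<sigma>) = (\<Sum>\<sigma>\<in>P. \<Sum>i<r. w {\<sigma> i, \<sigma> ((i + 1) mod r)} / Cw r w {\<sigma> i, \<sigma> ((i + 1) mod r)})"
    using three_le_r by (intro sum.cong) (simp_all add: P_def R_def sum_cycle_edges_map_permutes)
  also have "\<dots> = (\<Sum>i<r. \<Sum>\<sigma>\<in>P. w {\<sigma> i, \<sigma> ((i + 1) mod r)} / Cw r w {\<sigma> i, \<sigma> ((i + 1) mod r)})"
    by (rule sum.swap)
  also have "\<dots> = (\<Sum>i<r. fact r / real r)"
  proof (rule sum.cong)
    fix i
    assume "i \<in> {..<r}"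
    moreover have "(i + 1) mod r \<noteq> i"
      using \<open>i \<in> {..<r}\<close> three_le_r by (simp add: succ_mod_eq)
    ultimately show "(\<Sum>\<sigma>\<in>P. w {\<sigma> i, \<sigma> ((i + 1) mod r)} / Cw r w {\<sigma> i, \<sigma> ((i + 1) mod r)})
                       = fact r / real r"
      using sum_permutes_ratio_pair[of i "(i + 1) mod r"] three_le_r by (simp add: P_def field_simps)
  qed simp
  also have "\<dots> = (\<Sum>\<sigma>\<in>P. 1)"
    using three_le_r by (simp add: P_def card_permutations)
  finally have sum_R: "(\<Sum>\<sigma>\<in>P. R \<sigma>) = (\<Sum>\<sigma>\<in>P. 1)" .
  have "finite P"
    by (simp add: P_def finite_permutations)
  then have "R \<sigma> = 1" if "\<sigma> \<in> P" for \<sigma>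
    using sum_R R_le that by (rule sum_mono_inv[rotated 3])
  moreover obtain \<sigma> where "\<sigma> permutes {..<r}" "xs = map \<sigma> [0..<r]"
    using assms by (rule hamiltonian_eq_map_permutes)
  ultimately show ?thesis
    by (simp add: R_def P_def)
qed

lemma Cw_hamiltonian:
  assumes "hamiltonian r xs" "e \<in> cycle_edges xs"
  shows "Cw r w e = cycle_weight w xs"
  using hamiltonian_is_cycle[OF assms(1) three_le_r] pos ratio_sum_hamiltonian_eq_1[OF assms(1)] assms(2)
  by (rule cycle_ratio_sum_le_1(2))

lemma Cw_adjacent:
  assumes "a < r" "b < r" "c < r" "distinct [a, b, c]"
  shows "Cw r w {a, b} = Cw r w {b, c}"
proof -
  obtain ys where ham: "hamiltonian r ([a, b, c] @ ys)"
    using hamiltonian_extend[of "[a, b, c]" r] assms by auto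
  have "{a, b} \<in> cycle_edges ([a, b, c] @ ys)" "{b, c} \<in> cycle_edges ([a, b, c] @ ys)"
    using consecutive_in_cycle_edges[of 0 "[a, b, c] @ ys"] consecutive_in_cycle_edges[of 1 "[a, b, c] @ ys"]
    by simp_all
  then show ?thesis
    using Cw_hamiltonian[OF ham] by simp
qed

lemma Cw_constant:
  assumes "u < r" "v < r" "u \<noteq> v" "x < r" "y < r" "x \<noteq> y"
  shows "Cw r w {u, v} = Cw r w {x, y}"
proof -
  have adj: "Cw r w {a, b} = Cw r w {b, c}" if "a < r" "b < r" "c < r" "a \<noteq> b" "b \<noteq> c" "a \<noteq> c" for a b c
    using that by (intro Cw_adjacent) auto
  show ?thesis
  proof (cases "x \<in> {u, v}")
    case True
    then obtain z where z: "{u, v} = {z, x}" "z < r" "z \<noteq> x"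
      using assms by (auto simp: insert_commute)
    then show ?thesis
      using adj[of z x y] assms by (cases "y = z") (auto simp: insert_commute)
  next
    case False
    then have "Cw r w {u, v} = Cw r w {v, x}"
      using adj[of u v x] assms by auto
    also have "\<dots> = Cw r w {x, y}"
      using adj[of v x y] assms False by (cases "y = v") (auto simp: insert_commute)
    finally show ?thesis .
  qed
qed

lemma four_point:
  assumes "a < r" "b < r" "c < r" "d < r" "distinct [a, b, c, d]"
  shows "w {a, b} + w {c, d} = w {a, c} + w {b, d}"
proof -
  obtain ys where ham: "hamiltonian r (a # b # c # d # ys)"
    using hamiltonian_extend[of "[a, b, c, d]" r] assms by auto
  then have ham_swapped: "hamiltonian r (a # c # b # d # ys)"
    by (auto simp: hamiltonian_def)
  have "{b, c} \<in> cycle_edges (a # b # c # d # ys)" "{b, c} \<in> cycle_edges (a # c # b # d # ys)"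
    using consecutive_in_cycle_edges[of 1 "a # b # c # d # ys"]
      consecutive_in_cycle_edges[of 1 "a # c # b # d # ys"]
    by (simp_all add: insert_commute)
  then have "cycle_weight w (a # b # c # d # ys) = cycle_weight w (a # c # b # d # ys)"
    using Cw_hamiltonian[OF ham] Cw_hamiltonian[OF ham_swapped] by metis
  with cycle_weight_swap[of a b c d ys w] ham show ?thesis
    by (simp add: hamiltonian_def)
qed

end

theorem proposition3p7:
  fixes r :: nat and w :: "nat set \<Rightarrow> real"
  assumes "r \<ge> 4"
    and "\<And>e. e \<in> Kedges r \<Longrightarrow> w e > 0"
    and "(\<Sum>e\<in>Kedges r. w e / Cw r w e) = (real r - 1) / 2"
  shows "\<exists>a :: nat \<Rightarrow> real. \<forall>u v. u < r \<longrightarrow> v < r \<longrightarrow> u \<noteq> v \<longrightarrow>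
           w {u, v} / Cw r w {u, v} = (a u + a v) / 2"
proof -
  have r: "3 \<le> r"
    using assms(1) by simp
  obtain h where h: "\<And>u v. u < r \<Longrightarrow> v < r \<Longrightarrow> u \<noteq> v \<Longrightarrow> w {u, v} = h u + h v"
    using four_point_imp_additive four_point[OF r assms(2,3)] by metis
  define W where "W = Cw r w {0, 1}"
  have Cw: "Cw r w {u, v} = W" if "u < r" "v < r" "u \<noteq> v" for u v
    using Cw_constant[OF r assms(2,3) that, of 0 1] r by (simp add: W_def)
  show ?thesis
    by (rule exI[of _ "\<lambda>u. 2 * h u / W"]) (simp add: h Cw add_divide_distrib)
qed

end
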